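(* Let $t\geq 0$ be an integer. There exists a partition $\mathcal N_t$ of the set $\mathbb N$ of nonnegative integers such that (i) each class $N\in\mathcal N_t$ is a residue class modulo $2^r$ for some $r\ge 0$, i.e. of the form $a+2^r\mathbb N$ with $0\leq a<2^r$; (ii) for every integer $k$ the set $B(k,t)=\{n\in \mathbb N:s(n+t)-s(n)=k\}$ is a finite (possibly empty) union of classes of $\mathcal N_t$. In particular, each set $B(k,t)$ has an asymptotic density $\delta(k,t)$. Moreover, for all $k\in\mathbb{Z}$ and all integers $t\geq 1$ these densities satisfy \[ \delta(k,1)=\begin{cases}2^{k-2},&k\leq 1,\\0&\text{otherwise,}\end{cases}\qquad \delta(k,2t)=\delta(k,t),\qquad \delta(k,2t+1)=\tfrac 12 \delta(k-1,t)+\tfrac 12\delta(k+1,t+1). \]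
   Context: For a nonnegative integer $n$, $s(n)$ denotes the binary sum of digits of $n$ (the number of digits $1$ in its base-$2$ expansion). *)

theory Defs
  imports Complex_Main "HOL-Library.Disjoint_Sets"
begin

fun bsum :: "nat \<Rightarrow> nat" where
  "bsum n = (if n = 0 then 0 else n mod 2 + bsum (n div 2))"

declare bsum.simps[simp del]

definition B :: "int \<Rightarrow> nat \<Rightarrow> nat set" where
  "B k t = {n. int (bsum (n + t)) - int (bsum n) = k}"

definition is_dyadic_class :: "nat set \<Rightarrow> bool" where
  "is_dyadic_class N \<longleftrightarrow> (\<exists>r a. a < 2 ^ r \<and> N = (\<lambda>m. a + 2 ^ r * m) ` UNIV)"

definition has_density :: "nat set \<Rightarrow> real \<Rightarrow> bool" where
  "has_density A d \<longleftrightarrow> (\<lambda>N. real (card (A \<inter> {..<N})) / real N) \<longlonglongrightarrow> d"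

end

theory Submission
  imports Defs "HOL-Computational_Algebra.Primes" "HOL-Real_Asymp.Real_Asymp"
begin

text \<open>
  Choose \<open>L\<close> with \<open>t < 2^L\<close> and write \<open>n = a + 2^L q\<close> with \<open>a < 2^L\<close>.
  If \<open>a + t < 2^L\<close>, adding \<open>t\<close> only touches the low digits and
  \<open>s(n+t) - s(n) = s(a+t) - s(a)\<close>. Otherwise a carry of \<open>1\<close> enters \<open>q\<close>, which turns the
  \<open>\<nu>\<^sub>2(q+1)\<close> trailing ones of \<open>q\<close> into zeros, and
  \<open>s(n+t) - s(n) = s(a+t-2^L) + 1 - s(a) - \<nu>\<^sub>2(q+1)\<close>. So the difference only depends on
  the key \<open>(a, \<nu>\<^sub>2(q+1))\<close> (second entry only in the carry case); every fibre of the key is a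
  residue class modulo a power of \<open>2\<close>, and a fixed value \<open>k\<close> bounds \<open>\<nu>\<^sub>2(q+1)\<close>, so only
  finitely many fibres make up \<open>B(k,t)\<close>. Residue classes have densities, hence so does \<open>B(k,t)\<close>.

  For the recursions, split \<open>n\<close> by parity: on even and odd \<open>n\<close> the set \<open>B(k,2t)\<close> looks like
  \<open>B(k,t)\<close> twice, and \<open>B(k,2t+1)\<close> like \<open>B(k-1,t)\<close> and \<open>B(k+1,t+1)\<close>; interleaving two sets
  averages their densities.
\<close>

lemma bsum_0 [simp]: "bsum 0 = 0"
  by (simp add: bsum.simps)

lemma bsum_eq: "bsum n = n mod 2 + bsum (n div 2)"
  by (cases "n = 0") (simp_all add: bsum.simps)

lemma bsum_double [simp]: "bsum (2 * m) = bsum m"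
  using bsum_eq[of "2 * m"] by simp

lemma bsum_double_Suc [simp]: "bsum (Suc (2 * m)) = Suc (bsum m)"
  using bsum_eq[of "Suc (2 * m)"] by simp

lemma bsum_le: "bsum n \<le> n"
proof (induction n rule: less_induct)
  case (less n)
  show ?case
  proof (cases "n = 0")
    case False
    with less have "bsum (n div 2) \<le> n div 2"
      by simp
    then show ?thesis
      using bsum_eq[of n] by linarith
  qed simp
qed

lemma bsum_add_mult_power2:
  assumes "a < 2 ^ L"
  shows "bsum (a + 2 ^ L * q) = bsum a + bsum q"
  using assms
proof (induction L arbitrary: a)
  case (Suc L)
  have "a + 2 ^ Suc L * q = a mod 2 + 2 * (a div 2 + 2 ^ L * q)"
    by simp
  then have "bsum (a + 2 ^ Suc L * q) = bsum (a mod 2 + 2 * (a div 2 + 2 ^ L * q))"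
    by (rule arg_cong)
  also have "\<dots> = a mod 2 + bsum (a div 2 + 2 ^ L * q)"
    by (subst bsum_eq) (simp add: add.commute)
  also have "\<dots> = bsum a + bsum q"
    using Suc bsum_eq[of a] by simp
  finally show ?case .
qed simp

lemma bsum_power2_minus_1: "bsum (2 ^ j - 1) = j"
proof (induction j)
  case (Suc j)
  have "(2::nat) ^ Suc j - 1 = Suc (2 * (2 ^ j - 1))"
    using one_le_power[of "2::nat" j] power_Suc[of "2::nat" j] by linarith
  with Suc show ?case
    by simp
qed simp

lemma multiplicity_2_Suc_eq_iff:
  fixes q :: nat
  shows "multiplicity 2 (Suc q) = j \<longleftrightarrow> (\<exists>m. q = (2 ^ j - 1) + 2 ^ Suc j * m)"
proof
  assume j: "multiplicity 2 (Suc q) = j"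
  obtain y where y: "Suc q = 2 ^ j * y" "\<not> 2 dvd y"
    using multiplicity_decompose'[of "Suc q" 2] j by auto
  then obtain m where "y = Suc (2 * m)"
    by (metis oddE Suc_eq_plus1)
  with y have "q = (2 ^ j - 1) + 2 ^ Suc j * m"
    by (simp add: algebra_simps)
  then show "\<exists>m. q = (2 ^ j - 1) + 2 ^ Suc j * m" ..
next
  assume "\<exists>m. q = (2 ^ j - 1) + 2 ^ Suc j * m"
  then obtain m where "q = (2 ^ j - 1) + 2 ^ Suc j * m" ..
  then have "Suc q = 2 ^ j * Suc (2 * m)"
    by (simp add: algebra_simps)
  then show "multiplicity 2 (Suc q) = j"
    by (rule multiplicity_decomposeI) simp_all
qed

lemma multiplicity_2_Suc_eq_range:
  "{q :: nat. multiplicity 2 (Suc q) = j} = range (\<lambda>m. (2 ^ j - 1) + 2 ^ Suc j * m)"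
  using multiplicity_2_Suc_eq_iff by blast

lemma bsum_Suc:
  fixes q :: nat
  shows "int (bsum (Suc q)) = int (bsum q) + 1 - int (multiplicity 2 (Suc q))"
proof -
  define j where "j = multiplicity 2 (Suc q)"
  then obtain m where "q = (2 ^ j - 1) + 2 ^ Suc j * m"
    using multiplicity_2_Suc_eq_iff[of q j] by blast
  then have q: "q = (2 ^ j - 1) + 2 ^ j * (2 * m)" and Suc_q: "Suc q = 2 ^ j * Suc (2 * m)"
    by (simp_all add: algebra_simps)
  have "bsum q = bsum (2 ^ j - 1) + bsum (2 * m)"
    unfolding q by (rule bsum_add_mult_power2) simp
  then have "bsum q = j + bsum m"
    using bsum_power2_minus_1[of j] by simp
  moreover have "bsum (Suc q) = Suc (bsum m)"
    using Suc_q bsum_add_mult_power2[of 0 j "Suc (2 * m)"] by simp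
  ultimately show ?thesis
    unfolding j_def by simp
qed

lemma is_dyadic_class_UNIV: "is_dyadic_class UNIV"
  unfolding is_dyadic_class_def by (rule exI[of _ 0], rule exI[of _ 0]) auto

lemma is_dyadic_class_multiplicity_2_Suc: "is_dyadic_class {q. multiplicity 2 (Suc q) = j}"
proof -
  have "(2::nat) ^ j - 1 < 2 ^ Suc j"
    by (simp add: less_imp_diff_less)
  then show ?thesis
    unfolding is_dyadic_class_def multiplicity_2_Suc_eq_range by blast
qed

lemma is_dyadic_class_mod_div:
  assumes a: "a < 2 ^ L" and S: "is_dyadic_class S"
  shows "is_dyadic_class {n. n mod 2 ^ L = a \<and> n div 2 ^ L \<in> S}"
proof -
  obtain r b where b: "b < 2 ^ r" and S_eq: "S = range (\<lambda>m. b + 2 ^ r * m)"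
    using S unfolding is_dyadic_class_def by blast
  have "{n. n mod 2 ^ L = a \<and> n div 2 ^ L \<in> S} = range (\<lambda>m. (a + 2 ^ L * b) + 2 ^ (L + r) * m)"
  proof (intro equalityI subsetI)
    fix n assume "n \<in> {n. n mod 2 ^ L = a \<and> n div 2 ^ L \<in> S}"
    then obtain m where "n mod 2 ^ L = a" "n div 2 ^ L = b + 2 ^ r * m"
      unfolding S_eq by auto
    then have "n = (a + 2 ^ L * b) + 2 ^ (L + r) * m"
      using div_mult_mod_eq[of n "2 ^ L"] by (simp add: algebra_simps power_add)
    then show "n \<in> range (\<lambda>m. (a + 2 ^ L * b) + 2 ^ (L + r) * m)"
      by blast
  next
    fix n assume "n \<in> range (\<lambda>m. (a + 2 ^ L * b) + 2 ^ (L + r) * m)"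
    then obtain m where "n = a + 2 ^ L * (b + 2 ^ r * m)"
      by (auto simp: algebra_simps power_add)
    then show "n \<in> {n. n mod 2 ^ L = a \<and> n div 2 ^ L \<in> S}"
      using a unfolding S_eq by auto
  qed
  moreover have "a + 2 ^ L * b < 2 ^ (L + r)"
  proof -
    have "a + 2 ^ L * b < 2 ^ L * Suc b"
      using a by simp
    also have "\<dots> \<le> 2 ^ L * 2 ^ r"
      using b by (intro mult_le_mono2) simp
    finally show ?thesis
      by (simp add: power_add)
  qed
  ultimately show ?thesis
    unfolding is_dyadic_class_def by blast
qed

definition interleave :: "nat set \<Rightarrow> nat set \<Rightarrow> nat set" where
  "interleave A C = {n. (even n \<and> n div 2 \<in> A) \<or> (odd n \<and> n div 2 \<in> C)}"

lemma interleave_Int_lessThan: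
  "interleave A C \<inter> {..<N} =
     (\<lambda>m. 2 * m) ` (A \<inter> {..<(N + 1) div 2}) \<union> (\<lambda>m. 2 * m + 1) ` (C \<inter> {..<N div 2})"
proof (intro equalityI subsetI)
  fix n assume n: "n \<in> interleave A C \<inter> {..<N}"
  show "n \<in> (\<lambda>m. 2 * m) ` (A \<inter> {..<(N + 1) div 2}) \<union> (\<lambda>m. 2 * m + 1) ` (C \<inter> {..<N div 2})"
  proof (cases "even n")
    case True
    then have "n = 2 * (n div 2)" "n div 2 < (N + 1) div 2"
      using n by auto
    then show ?thesis
      using n True unfolding interleave_def by blast
  next
    case False
    then have "n = 2 * (n div 2) + 1" "n div 2 < N div 2"
      using n by (auto, presburger)
    then show ?thesis
      using n False unfolding interleave_def by blast
  qed
qed (auto simp: interleave_def)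

lemma card_interleave_Int_lessThan:
  "card (interleave A C \<inter> {..<N}) = card (A \<inter> {..<(N + 1) div 2}) + card (C \<inter> {..<N div 2})"
proof -
  have "card (interleave A C \<inter> {..<N}) =
          card ((\<lambda>m. 2 * m) ` (A \<inter> {..<(N + 1) div 2})) + card ((\<lambda>m. 2 * m + 1) ` (C \<inter> {..<N div 2}))"
    unfolding interleave_Int_lessThan by (rule card_Un_disjoint) (auto, presburger)
  then show ?thesis
    by (simp add: card_image inj_on_def)
qed

lemma half_div_tendsto: "(\<lambda>N. real ((N + c) div 2) / real N) \<longlonglongrightarrow> 1 / 2"
proof (rule tendsto_sandwich)
  show "\<forall>\<^sub>F N in sequentially. (real N + real c - 1) / 2 / real N \<le> real ((N + c) div 2) / real N"
  proof (intro always_eventually allI divide_right_mono)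
    fix N
    have "real (N + c) \<le> real (2 * ((N + c) div 2) + 1)"
      by (rule of_nat_mono) presburger
    then show "(real N + real c - 1) / 2 \<le> real ((N + c) div 2)"
      by simp
  qed simp
  show "\<forall>\<^sub>F N in sequentially. real ((N + c) div 2) / real N \<le> (real N + real c) / 2 / real N"
  proof (intro always_eventually allI divide_right_mono)
    fix N
    have "real (2 * ((N + c) div 2)) \<le> real (N + c)"
      by (rule of_nat_mono) presburger
    then show "real ((N + c) div 2) \<le> (real N + real c) / 2"
      by simp
  qed simp
qed real_asymp+

lemma has_density_half_prefix:
  assumes "has_density A a"
  shows "(\<lambda>N. real (card (A \<inter> {..<(N + c) div 2})) / real N) \<longlonglongrightarrow> a / 2"
proof -
  let ?h = "\<lambda>N::nat. (N + c) div 2"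
  have h: "filterlim ?h at_top sequentially"
    unfolding filterlim_at_top
  proof
    fix Z :: nat
    show "\<forall>\<^sub>F N in sequentially. Z \<le> ?h N"
      using eventually_ge_at_top[of "2 * Z"] by eventually_elim linarith
  qed
  have "(\<lambda>N. real (card (A \<inter> {..<?h N})) / real (?h N)) \<longlonglongrightarrow> a"
    using filterlim_compose[OF assms[unfolded has_density_def] h] by (simp add: o_def)
  then have "(\<lambda>N. real (card (A \<inter> {..<?h N})) / real (?h N) * (real (?h N) / real N)) \<longlonglongrightarrow> a * (1 / 2)"
    using half_div_tendsto by (rule tendsto_mult)
  moreover have "(\<lambda>N. real (card (A \<inter> {..<?h N})) / real (?h N) * (real (?h N) / real N)) =
                   (\<lambda>N. real (card (A \<inter> {..<?h N})) / real N)"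
  proof
    fix N
    show "real (card (A \<inter> {..<?h N})) / real (?h N) * (real (?h N) / real N) =
            real (card (A \<inter> {..<?h N})) / real N"
      by (cases "?h N = 0") auto
  qed
  ultimately show ?thesis
    by simp
qed

lemma has_density_interleave:
  assumes "has_density A a" "has_density C c"
  shows "has_density (interleave A C) ((a + c) / 2)"
  using tendsto_add[OF has_density_half_prefix[OF assms(1), of 1] has_density_half_prefix[OF assms(2), of 0]]
  unfolding has_density_def card_interleave_Int_lessThan by (simp add: add_divide_distrib)

lemma has_density_empty: "has_density {} 0"
  unfolding has_density_def by simp

lemma has_density_UNIV: "has_density UNIV 1"
  unfolding has_density_def
proof (rule Lim_transform_eventually)
  show "\<forall>\<^sub>F N in sequentially. 1 = real (card (UNIV \<inter> {..<N})) / real N"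
    using eventually_gt_at_top[of "0::nat"] by eventually_elim simp
qed simp

lemma has_density_unique: "has_density A a \<Longrightarrow> has_density A b \<Longrightarrow> a = b"
  unfolding has_density_def by (rule LIMSEQ_unique)

lemma residue_class_Suc_eq_interleave:
  fixes b r :: nat
  defines "R \<equiv> range (\<lambda>m. b div 2 + 2 ^ r * m)"
  shows "range (\<lambda>m. b + 2 ^ Suc r * m) = interleave (if even b then R else {}) (if odd b then R else {})"
proof (intro equalityI subsetI)
  fix n assume "n \<in> range (\<lambda>m. b + 2 ^ Suc r * m)"
  then obtain m where "n = b mod 2 + 2 * (b div 2 + 2 ^ r * m)"
    by auto
  then have "n div 2 = b div 2 + 2 ^ r * m" "even n \<longleftrightarrow> even b"
    by auto
  then show "n \<in> interleave (if even b then R else {}) (if odd b then R else {})"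
    unfolding interleave_def R_def by auto
next
  fix n assume "n \<in> interleave (if even b then R else {}) (if odd b then R else {})"
  then obtain m where m: "n div 2 = b div 2 + 2 ^ r * m" and "n mod 2 = b mod 2"
    unfolding interleave_def R_def by (auto split: if_splits simp: odd_iff_mod_2_eq_one even_iff_mod_2_eq_zero)
  then have "n = b + 2 ^ Suc r * m"
    using div_mult_mod_eq[of n 2] div_mult_mod_eq[of b 2] by (simp add: algebra_simps)
  then show "n \<in> range (\<lambda>m. b + 2 ^ Suc r * m)"
    by blast
qed

lemma has_density_residue_class:
  "b < 2 ^ r \<Longrightarrow> has_density (range (\<lambda>m. b + 2 ^ r * m)) (1 / 2 ^ r)"
proof (induction r arbitrary: b)
  case 0
  then show ?case
    using has_density_UNIV by simp
next
  case (Suc r)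
  then have R: "has_density (range (\<lambda>m. b div 2 + 2 ^ r * m)) (1 / 2 ^ r)"
    by simp
  show ?case
    using has_density_interleave[OF R has_density_empty] has_density_interleave[OF has_density_empty R]
    unfolding residue_class_Suc_eq_interleave by (cases "even b") (simp_all add: mult.commute)
qed

lemma has_density_dyadic_class: "is_dyadic_class N \<Longrightarrow> \<exists>d. has_density N d"
  unfolding is_dyadic_class_def by (auto dest: has_density_residue_class)

lemma has_density_Un:
  assumes "has_density A a" "has_density C c" "A \<inter> C = {}"
  shows "has_density (A \<union> C) (a + c)"
proof -
  have "card ((A \<union> C) \<inter> {..<N}) = card (A \<inter> {..<N}) + card (C \<inter> {..<N})" for N
    using assms(3) by (subst card_Un_disjoint[symmetric]) (auto simp: Int_Un_distrib2)
  then show ?thesis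
    using tendsto_add[OF assms(1,2)[unfolded has_density_def]]
    unfolding has_density_def by (simp add: add_divide_distrib)
qed

lemma has_density_Union:
  assumes "finite F" "disjoint F" "\<And>A. A \<in> F \<Longrightarrow> \<exists>d. has_density A d"
  shows "\<exists>d. has_density (\<Union>F) d"
  using assms
proof (induction F rule: finite_induct)
  case empty
  then show ?case
    using has_density_empty by auto
next
  case (insert A F)
  have "disjoint F"
    using insert.prems(1) by (simp add: pairwise_insert)
  then obtain c where c: "has_density (\<Union>F) c"
    using insert.IH insert.prems(2) by blast
  obtain a where a: "has_density A a"
    using insert.prems(2) by blast
  have "A \<inter> \<Union>F = {}"
    using insert.prems(1) insert.hyps(2) by (auto simp: pairwise_insert disjnt_def)
  from has_density_Un[OF a c this] show ?case
    by auto
qed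

lemma B_double: "B k (2 * t) = interleave (B k t) (B k t)"
proof -
  have "n \<in> B k (2 * t) \<longleftrightarrow> n \<in> interleave (B k t) (B k t)" for n
  proof (cases "even n")
    case True
    then obtain m where n: "n = 2 * m" ..
    then have "n + 2 * t = 2 * (m + t)"
      by simp
    then have "bsum (n + 2 * t) = bsum (m + t)"
      by (metis bsum_double)
    then show ?thesis
      unfolding B_def interleave_def using True n by simp
  next
    case False
    then obtain m where n: "n = Suc (2 * m)"
      by (metis oddE Suc_eq_plus1)
    then have "n + 2 * t = Suc (2 * (m + t))"
      by simp
    then have "bsum (n + 2 * t) = Suc (bsum (m + t))"
      by (metis bsum_double_Suc)
    then show ?thesis
      unfolding B_def interleave_def using False n by simp
  qed
  then show ?thesis
    by blast
qed

lemma B_double_Suc: "B k (Suc (2 * t)) = interleave (B (k - 1) t) (B (k + 1) (Suc t))"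
proof -
  have "n \<in> B k (Suc (2 * t)) \<longleftrightarrow> n \<in> interleave (B (k - 1) t) (B (k + 1) (Suc t))" for n
  proof (cases "even n")
    case True
    then obtain m where n: "n = 2 * m" ..
    then have "n + Suc (2 * t) = Suc (2 * (m + t))"
      by simp
    then have "bsum (n + Suc (2 * t)) = Suc (bsum (m + t))"
      by (metis bsum_double_Suc)
    then show ?thesis
      unfolding B_def interleave_def using True n by auto
  next
    case False
    then obtain m where n: "n = Suc (2 * m)"
      by (metis oddE Suc_eq_plus1)
    then have "n + Suc (2 * t) = 2 * (m + Suc t)"
      by simp
    then have "bsum (n + Suc (2 * t)) = bsum (m + Suc t)"
      by (metis bsum_double)
    then show ?thesis
      unfolding B_def interleave_def using False n by auto
  qed
  then show ?thesis
    by blast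
qed

lemma B_one: "B k 1 = {n. int (multiplicity 2 (Suc n)) = 1 - k}"
proof -
  have "int (bsum (n + 1)) - int (bsum n) = 1 - int (multiplicity 2 (Suc n))" for n
    using bsum_Suc[of n] by simp
  then show ?thesis
    unfolding B_def by auto
qed

lemma has_density_B_one: "has_density (B k 1) (if k \<le> 1 then 2 powr (real_of_int k - 2) else 0)"
proof (cases "k \<le> 1")
  case True
  define j where "j = nat (1 - k)"
  have "B k 1 = {n. multiplicity 2 (Suc n) = j}"
    unfolding B_one j_def using True by (intro Collect_cong) linarith
  also have "\<dots> = range (\<lambda>m. (2 ^ j - 1) + 2 ^ Suc j * m)"
    by (rule multiplicity_2_Suc_eq_range)
  finally have "has_density (B k 1) (1 / 2 ^ Suc j)"
    using has_density_residue_class[of "2 ^ j - 1" "Suc j"] by (simp add: less_imp_diff_less)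
  moreover have "2 powr (real_of_int k - 2) = 1 / 2 ^ Suc j"
  proof -
    have "real_of_int k - 2 = - real (Suc j)"
      unfolding j_def using True by simp
    then have "2 powr (real_of_int k - 2) = 1 / 2 powr real (Suc j)"
      by (simp only: powr_minus_divide)
    then show ?thesis
      by (simp only: powr_realpow zero_less_numeral)
  qed
  ultimately show ?thesis
    using True by simp
next
  case False
  then have "B k 1 = {}"
    unfolding B_one by auto
  then show ?thesis
    using False has_density_empty by simp
qed

definition carry_key :: "nat \<Rightarrow> nat \<Rightarrow> nat \<Rightarrow> nat \<times> nat" where
  "carry_key L t n =
     (n mod 2 ^ L, if n mod 2 ^ L + t < 2 ^ L then 0 else multiplicity 2 (Suc (n div 2 ^ L)))"

fun carry_diff :: "nat \<Rightarrow> nat \<Rightarrow> nat \<times> nat \<Rightarrow> int" where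
  "carry_diff L t (a, j) =
     (if a + t < 2 ^ L then int (bsum (a + t)) - int (bsum a)
      else int (bsum (a + t - 2 ^ L)) + 1 - int (bsum a) - int j)"

lemma bsum_add_diff_eq_carry_diff:
  assumes t: "t < 2 ^ L"
  shows "int (bsum (n + t)) - int (bsum n) = carry_diff L t (carry_key L t n)"
proof -
  define a where "a = n mod 2 ^ L"
  define q where "q = n div 2 ^ L"
  have a: "a < 2 ^ L" and n: "n = a + 2 ^ L * q"
    unfolding a_def q_def by simp_all
  have bsum_n: "bsum n = bsum a + bsum q"
    unfolding n by (rule bsum_add_mult_power2[OF a])
  show ?thesis
  proof (cases "a + t < 2 ^ L")
    case True
    have "bsum (n + t) = bsum (a + t) + bsum q"
      using bsum_add_mult_power2[OF True] n by (simp add: ac_simps)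
    with True bsum_n show ?thesis
      unfolding carry_key_def a_def[symmetric] by simp
  next
    case False
    have carry: "n + t = (a + t - 2 ^ L) + 2 ^ L * Suc q" and low: "a + t - 2 ^ L < 2 ^ L"
      using n a t False by simp_all
    have "bsum (n + t) = bsum (a + t - 2 ^ L) + bsum (Suc q)"
      unfolding carry using low by (rule bsum_add_mult_power2)
    with False bsum_n bsum_Suc[of q] show ?thesis
      unfolding carry_key_def a_def[symmetric] q_def[symmetric] by simp
  qed
qed

lemma is_dyadic_class_carry_key_fibre: "is_dyadic_class (carry_key L t -` {carry_key L t n})"
proof -
  define a where "a = n mod 2 ^ L"
  define S where "S = (if a + t < 2 ^ L then UNIV else {q. multiplicity 2 (Suc q) = multiplicity 2 (Suc (n div 2 ^ L))})"
  have "carry_key L t -` {carry_key L t n} = {m. m mod 2 ^ L = a \<and> m div 2 ^ L \<in> S}"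
    unfolding carry_key_def S_def a_def by auto
  moreover have "is_dyadic_class S"
    unfolding S_def using is_dyadic_class_UNIV is_dyadic_class_multiplicity_2_Suc by simp
  ultimately show ?thesis
    using is_dyadic_class_mod_div[of a L S] unfolding a_def by simp
qed

lemma finite_carry_diff_level:
  assumes t: "t < 2 ^ L"
  shows "finite {p \<in> range (carry_key L t). carry_diff L t p = k}"
proof (rule finite_subset)
  let ?J = "2 ^ L + 1 + nat \<bar>k\<bar>"
  show "{p \<in> range (carry_key L t). carry_diff L t p = k} \<subseteq> {..<2 ^ L} \<times> {..?J}"
  proof
    fix p assume "p \<in> {p \<in> range (carry_key L t). carry_diff L t p = k}"
    then obtain n where key: "carry_key L t n = p" and k: "carry_diff L t p = k"
      by blast
    obtain a j where p: "p = (a, j)"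
      by (cases p)
    have a: "a < 2 ^ L"
      using key unfolding p carry_key_def by auto
    have "j \<le> ?J"
    proof (cases "a + t < 2 ^ L")
      case True
      then show ?thesis
        using key unfolding p carry_key_def by auto
    next
      case False
      then have "bsum (a + t - 2 ^ L) < 2 ^ L"
        using bsum_le[of "a + t - 2 ^ L"] a t by linarith
      with False k show ?thesis
        unfolding p by auto
    qed
    with a show "p \<in> {..<2 ^ L} \<times> {..?J}"
      unfolding p by simp
  qed
qed simp

lemma partition_on_fibres: "partition_on UNIV (range (\<lambda>n. f -` {f n}))"
  by (rule partition_onI) (auto simp: disjnt_def)

lemma vimage_eq_Union_fibres: "f -` S = \<Union> ((\<lambda>p. f -` {p}) ` (S \<inter> range f))"
  by auto

lemma B_partition:
  "\<exists>P. partition_on UNIV P \<and> (\<forall>N\<in>P. is_dyadic_class N) \<and>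
       (\<forall>k. \<exists>F. F \<subseteq> P \<and> finite F \<and> B k t = \<Union>F)"
proof (intro exI conjI allI ballI)
  let ?f = "carry_key t t"
  show "partition_on UNIV (range (\<lambda>n. ?f -` {?f n}))"
    by (rule partition_on_fibres)
  show "is_dyadic_class N" if "N \<in> range (\<lambda>n. ?f -` {?f n})" for N
    using that is_dyadic_class_carry_key_fibre by auto
  fix k
  have t: "t < 2 ^ t"
    by (rule less_exp)
  let ?F = "(\<lambda>p. ?f -` {p}) ` ({p. carry_diff t t p = k} \<inter> range ?f)"
  show "?F \<subseteq> range (\<lambda>n. ?f -` {?f n})"
    by blast
  have "{p. carry_diff t t p = k} \<inter> range ?f = {p \<in> range ?f. carry_diff t t p = k}"
    by blast
  then show "finite ?F"
    using finite_carry_diff_level[OF t, of k] by simp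
  have "B k t = ?f -` {p. carry_diff t t p = k}"
    unfolding B_def vimage_def bsum_add_diff_eq_carry_diff[OF t] by simp
  then show "B k t = \<Union>?F"
    by (rule trans) (rule vimage_eq_Union_fibres)
qed

lemma has_density_B: "\<exists>d. has_density (B k t) d"
proof -
  obtain P where P: "partition_on UNIV P" and dyadic: "\<forall>N\<in>P. is_dyadic_class N"
    and "\<exists>F. F \<subseteq> P \<and> finite F \<and> B k t = \<Union>F"
    using B_partition[of t] by (elim exE conjE) (erule allE[of _ k])
  then obtain F where F: "F \<subseteq> P" "finite F" "B k t = \<Union>F"
    by (elim exE conjE)
  have "disjoint F"
    using partition_onD2[OF P] F(1) by (rule pairwise_subset)
  moreover have "\<exists>d. has_density N d" if "N \<in> F" for N
    using that F(1) dyadic has_density_dyadic_class by blast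
  ultimately show ?thesis
    unfolding F(3) using F(2) by (intro has_density_Union)
qed

theorem lemma2p1:
  shows "(\<forall>t::nat. \<exists>P. partition_on UNIV P \<and> (\<forall>N\<in>P. is_dyadic_class N) \<and>
            (\<forall>k::int. \<exists>F. F \<subseteq> P \<and> finite F \<and> B k t = \<Union>F))
       \<and> (\<exists>\<delta> :: int \<Rightarrow> nat \<Rightarrow> real.
            (\<forall>k t. has_density (B k t) (\<delta> k t))
          \<and> (\<forall>k. \<delta> k 1 = (if k \<le> 1 then 2 powr (real_of_int k - 2) else 0))
          \<and> (\<forall>k t. t \<ge> 1 \<longrightarrow> \<delta> k (2 * t) = \<delta> k t)
          \<and> (\<forall>k t. t \<ge> 1 \<longrightarrow>
                \<delta> k (2 * t + 1) = 1/2 * \<delta> (k - 1) t + 1/2 * \<delta> (k + 1) (t + 1)))"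
proof (intro conjI allI B_partition exI impI)
  define \<delta> where "\<delta> k t = (SOME d. has_density (B k t) d)" for k t
  have \<delta>: "has_density (B k t) (\<delta> k t)" for k t
    unfolding \<delta>_def using has_density_B by (rule someI_ex)
  show "has_density (B k t) (\<delta> k t)" for k t
    by (rule \<delta>)
  show "\<delta> k 1 = (if k \<le> 1 then 2 powr (real_of_int k - 2) else 0)" for k
    using \<delta> has_density_B_one by (rule has_density_unique)
  show "\<delta> k (2 * t) = \<delta> k t" for k t
  proof -
    have "has_density (B k (2 * t)) ((\<delta> k t + \<delta> k t) / 2)"
      unfolding B_double by (rule has_density_interleave[OF \<delta> \<delta>])
    then show ?thesis
      using has_density_unique[OF \<delta>] by simp
  qed
  show "\<delta> k (2 * t + 1) = 1/2 * \<delta> (k - 1) t + 1/2 * \<delta> (k + 1) (t + 1)" for k t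
  proof -
    have "has_density (B k (Suc (2 * t))) ((\<delta> (k - 1) t + \<delta> (k + 1) (Suc t)) / 2)"
      unfolding B_double_Suc by (rule has_density_interleave[OF \<delta> \<delta>])
    then show ?thesis
      using has_density_unique[OF \<delta>] by simp
  qed
qed

end
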